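(* $W_{\max}(19,9)\in\{6,7,\dots,27\}$.
   Context: A weighing matrix of order $n$ and weight $k$ is an $n\times n$ matrix $W$ with entries in $\{1,-1,0\}$ such that $WW^T=kI_n$. Two weighing matrices $W_1,W_2$ of order $n$ and weight $k$ are unbiased if $\frac{1}{\sqrt{k}}W_1W_2^T$ is also a weighing matrix of order $n$ and weight $k$; a set is mutually unbiased if any two distinct members are unbiased. $W_{\max}(n,9)$ denotes the maximum size of a set of mutually unbiased weighing matrices of order $n$ and weight $9$. *)

theory Defs
  imports Complex_Main
begin

text \<open>An n x n real matrix is represented as a function nat => nat => real,
  required to vanish outside the index range {0..<n} x {0..<n}, so that
  distinct matrices correspond to distinct functions.\<close>

definition weighing_matrix :: "nat \<Rightarrow> nat \<Rightarrow> (nat \<Rightarrow> nat \<Rightarrow> real) \<Rightarrow> bool" where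
  "weighing_matrix n k W \<longleftrightarrow>
     (\<forall>i j. \<not> (i < n \<and> j < n) \<longrightarrow> W i j = 0) \<and>
     (\<forall>i<n. \<forall>j<n. W i j \<in> {1, -1, 0}) \<and>
     (\<forall>i<n. \<forall>j<n. (\<Sum>l<n. W i l * W j l) = (if i = j then real k else 0))"

definition scaled_prod :: "nat \<Rightarrow> nat \<Rightarrow> (nat \<Rightarrow> nat \<Rightarrow> real) \<Rightarrow> (nat \<Rightarrow> nat \<Rightarrow> real)
    \<Rightarrow> (nat \<Rightarrow> nat \<Rightarrow> real)" where
  "scaled_prod n k W1 W2 = (\<lambda>i j. if i < n \<and> j < n
       then (\<Sum>l<n. W1 i l * W2 j l) / sqrt (real k) else 0)"

definition unbiased :: "nat \<Rightarrow> nat \<Rightarrow> (nat \<Rightarrow> nat \<Rightarrow> real) \<Rightarrow> (nat \<Rightarrow> nat \<Rightarrow> real) \<Rightarrow> bool" where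
  "unbiased n k W1 W2 \<longleftrightarrow> weighing_matrix n k W1 \<and> weighing_matrix n k W2 \<and>
     weighing_matrix n k (scaled_prod n k W1 W2)"

definition mutually_unbiased :: "nat \<Rightarrow> nat \<Rightarrow> (nat \<Rightarrow> nat \<Rightarrow> real) set \<Rightarrow> bool" where
  "mutually_unbiased n k S \<longleftrightarrow> (\<forall>W\<in>S. weighing_matrix n k W) \<and>
     (\<forall>W1\<in>S. \<forall>W2\<in>S. W1 \<noteq> W2 \<longrightarrow> unbiased n k W1 W2)"

text \<open>Maximum size of a set of mutually unbiased weighing matrices.
  (There are only finitely many weighing matrices of a given order, so the
  set of sizes is finite and nonempty; Sup is its maximum.)\<close>
definition W_max :: "nat \<Rightarrow> nat \<Rightarrow> nat" where
  "W_max n k = Sup {card S | S. finite S \<and> mutually_unbiased n k S}"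

end

theory Submission
  imports Defs "HOL-Analysis.Convex"
begin

(* Stack the n rows of all m matrices of a mutually unbiased set of weighing matrices of
   order n and weight k into N = n m vectors x_i in {0, 1, -1}^n of weight k.  Inner products
   are k or 0 within one matrix and 0 or +-sqrt k across two matrices, so every i has
   sum_j <x_i, x_j>^4 = k^4 + (m - 1) k^3.  On the other hand sum_{i,j} <x_i, x_j>^4 is the
   squared norm of the symmetric tensor T = sum_i x_i^(4); keeping only its entries T_aabb,
   T_abab, T_abba and applying Cauchy-Schwarz separately to the diagonal a = b and to the
   off-diagonal gives a lower bound quadratic in N.  Comparing the two yields
   m (3 k - n - 2) <= k (n - 1), i.e. m <= 27 for n = 19, k = 9.  Six explicit matrices,
   checked by evaluation, give the lower bound. *)

section \<open>Fourth moments of vectors with entries in {0, 1, -1}\<close>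

lemma sum_square_gram_eq_sum_square_gram_transpose:
  fixes f :: "'i \<Rightarrow> 'k \<Rightarrow> real"
  shows "(\<Sum>i\<in>I. \<Sum>j\<in>I. (\<Sum>k\<in>K. f i k * f j k)\<^sup>2) = (\<Sum>k\<in>K. \<Sum>l\<in>K. (\<Sum>i\<in>I. f i k * f i l)\<^sup>2)"
proof -
  define g where "g i j k l = (f i k * f i l) * (f j k * f j l)" for i j k l
  have "(\<Sum>i\<in>I. \<Sum>j\<in>I. (\<Sum>k\<in>K. f i k * f j k)\<^sup>2) = (\<Sum>i\<in>I. \<Sum>j\<in>I. \<Sum>k\<in>K. \<Sum>l\<in>K. g i j k l)"
    by (simp add: g_def power2_eq_square sum_product mult_ac)
  also have "\<dots> = (\<Sum>i\<in>I. \<Sum>k\<in>K. \<Sum>j\<in>I. \<Sum>l\<in>K. g i j k l)"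
    by (rule sum.cong[OF refl], rule sum.swap)
  also have "\<dots> = (\<Sum>k\<in>K. \<Sum>i\<in>I. \<Sum>l\<in>K. \<Sum>j\<in>I. g i j k l)"
    by (subst sum.swap) (simp only: sum.swap[of _ I K])
  also have "\<dots> = (\<Sum>k\<in>K. \<Sum>l\<in>K. \<Sum>i\<in>I. \<Sum>j\<in>I. g i j k l)"
    by (rule sum.cong[OF refl], rule sum.swap)
  also have "\<dots> = (\<Sum>k\<in>K. \<Sum>l\<in>K. (\<Sum>i\<in>I. f i k * f i l)\<^sup>2)"
    by (simp add: g_def power2_eq_square sum_product)
  finally show ?thesis .
qed

lemma sum_power4_inner_eq_sum_square_moments:
  fixes x :: "'i \<Rightarrow> 'a \<Rightarrow> real"
  shows "(\<Sum>i\<in>I. \<Sum>j\<in>I. (\<Sum>a\<in>A. x i a * x j a) ^ 4)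
    = (\<Sum>a\<in>A. \<Sum>b\<in>A. \<Sum>c\<in>A. \<Sum>d\<in>A. (\<Sum>i\<in>I. x i a * x i b * x i c * x i d)\<^sup>2)"
proof -
  define y where "y i p = x i (fst p) * x i (snd p)" for i p
  have sum_pairs: "(\<Sum>p\<in>A \<times> A. h p) = (\<Sum>a\<in>A. \<Sum>b\<in>A. h (a, b))" for h :: "'a \<times> 'a \<Rightarrow> real"
    by (simp add: sum.cartesian_product)
  have fourth: "(\<Sum>a\<in>A. x i a * x j a) ^ 4 = (\<Sum>p\<in>A \<times> A. y i p * y j p)\<^sup>2" for i j
  proof -
    have "(\<Sum>a\<in>A. x i a * x j a) ^ 4 = ((\<Sum>a\<in>A. x i a * x j a)\<^sup>2)\<^sup>2"
      by simp
    also have "(\<Sum>a\<in>A. x i a * x j a)\<^sup>2 = (\<Sum>p\<in>A \<times> A. y i p * y j p)"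
      by (simp only: sum_pairs) (simp add: power2_eq_square sum_product y_def mult_ac)
    finally show ?thesis .
  qed
  have "(\<Sum>i\<in>I. \<Sum>j\<in>I. (\<Sum>a\<in>A. x i a * x j a) ^ 4)
      = (\<Sum>p\<in>A \<times> A. \<Sum>q\<in>A \<times> A. (\<Sum>i\<in>I. y i p * y i q)\<^sup>2)"
    unfolding fourth by (rule sum_square_gram_eq_sum_square_gram_transpose)
  also have "\<dots> = (\<Sum>a\<in>A. \<Sum>b\<in>A. \<Sum>c\<in>A. \<Sum>d\<in>A. (\<Sum>i\<in>I. x i a * x i b * x i c * x i d)\<^sup>2)"
    by (simp only: sum_pairs) (simp add: y_def mult.assoc)
  finally show ?thesis .
qed

lemma sum_square_tensor_lower_bound:
  fixes T :: "'a \<Rightarrow> 'a \<Rightarrow> 'a \<Rightarrow> 'a \<Rightarrow> real"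
  assumes A: "finite A"
    and sym1: "\<And>a b. T a b a b = T a a b b" and sym2: "\<And>a b. T a b b a = T a a b b"
  shows "3 * (\<Sum>a\<in>A. \<Sum>b\<in>A. (T a a b b)\<^sup>2) - 2 * (\<Sum>a\<in>A. (T a a a a)\<^sup>2)
    \<le> (\<Sum>a\<in>A. \<Sum>b\<in>A. \<Sum>c\<in>A. \<Sum>d\<in>A. (T a b c d)\<^sup>2)"
proof -
  define Q where "Q a b = (\<Sum>c\<in>A. \<Sum>d\<in>A. (T a b c d)\<^sup>2)" for a b
  have diagonal: "(\<Sum>c\<in>A. (T a a c c)\<^sup>2) \<le> Q a a" for a
    unfolding Q_def using A by (intro sum_mono member_le_sum) auto
  have off_diagonal: "2 * (T a a b b)\<^sup>2 \<le> Q a b" if "a \<in> A" "b \<in> A" "a \<noteq> b" for a b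
  proof -
    have "2 * (T a a b b)\<^sup>2 = (\<Sum>p\<in>{(a, b), (b, a)}. (T a b (fst p) (snd p))\<^sup>2)"
      using that by (simp add: sym1 sym2)
    also have "\<dots> \<le> (\<Sum>p\<in>A \<times> A. (T a b (fst p) (snd p))\<^sup>2)"
      using that A by (intro sum_mono2) auto
    also have "\<dots> = Q a b"
      by (simp add: Q_def sum.cartesian_product case_prod_unfold)
    finally show ?thesis .
  qed
  have row: "(\<Sum>c\<in>A. (T a a c c)\<^sup>2) + 2 * ((\<Sum>b\<in>A. (T a a b b)\<^sup>2) - (T a a a a)\<^sup>2) \<le> (\<Sum>b\<in>A. Q a b)"
    if a: "a \<in> A" for a
  proof -
    have "2 * ((\<Sum>b\<in>A. (T a a b b)\<^sup>2) - (T a a a a)\<^sup>2) = (\<Sum>b\<in>A - {a}. 2 * (T a a b b)\<^sup>2)"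
      using A a by (simp add: sum.remove sum_distrib_left)
    also have "\<dots> \<le> (\<Sum>b\<in>A - {a}. Q a b)"
      using a by (intro sum_mono off_diagonal) auto
    finally show ?thesis
      using diagonal[of a] A a by (simp add: sum.remove)
  qed
  have "3 * (\<Sum>a\<in>A. \<Sum>b\<in>A. (T a a b b)\<^sup>2) - 2 * (\<Sum>a\<in>A. (T a a a a)\<^sup>2)
      = (\<Sum>a\<in>A. (\<Sum>c\<in>A. (T a a c c)\<^sup>2) + 2 * ((\<Sum>b\<in>A. (T a a b b)\<^sup>2) - (T a a a a)\<^sup>2))"
    by (simp add: sum.distrib sum_subtractf flip: sum_distrib_left)
  also have "\<dots> \<le> (\<Sum>a\<in>A. \<Sum>b\<in>A. Q a b)"
    by (intro sum_mono row)
  finally show ?thesis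
    by (simp add: Q_def)
qed

lemma off_diagonal_sum_squared_le:
  fixes f :: "'a \<Rightarrow> 'a \<Rightarrow> real"
  assumes A: "finite A"
  shows "((\<Sum>a\<in>A. \<Sum>b\<in>A. f a b) - (\<Sum>a\<in>A. f a a))\<^sup>2
    \<le> ((\<Sum>a\<in>A. \<Sum>b\<in>A. (f a b)\<^sup>2) - (\<Sum>a\<in>A. (f a a)\<^sup>2)) * (real (card A) * real (card A) - real (card A))"
proof -
  define diag where "diag = (\<lambda>a. (a, a)) ` A"
  define off where "off = A \<times> A - diag"
  have diag: "diag \<subseteq> A \<times> A" "finite diag"
    using A by (auto simp: diag_def)
  have inj: "inj_on (\<lambda>a. (a, a)) A"
    by (auto intro: inj_onI)
  have split: "(\<Sum>p\<in>off. g (fst p) (snd p)) = (\<Sum>a\<in>A. \<Sum>b\<in>A. g a b) - (\<Sum>a\<in>A. g a a)"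
    for g :: "'a \<Rightarrow> 'a \<Rightarrow> real"
    using A diag inj unfolding off_def
    by (simp add: sum_diff sum.cartesian_product case_prod_unfold diag_def sum.reindex)
  have "real (card off) = real (card A) * real (card A) - real (card A)"
    using A diag inj unfolding off_def
    by (simp add: card_Diff_subset card_cartesian_product diag_def card_image of_nat_diff)
  then show ?thesis
    using sum_squared_le_sum_of_squares[of "\<lambda>p. f (fst p) (snd p)" off] split[of f]
      split[of "\<lambda>a b. (f a b)\<^sup>2"]
    by simp
qed

lemma sum_square_symmetric_tensor_ge:
  fixes T :: "'a \<Rightarrow> 'a \<Rightarrow> 'a \<Rightarrow> 'a \<Rightarrow> real"
  assumes A: "finite A" "A \<noteq> {}"
    and sym1: "\<And>a b. T a b a b = T a a b b" and sym2: "\<And>a b. T a b b a = T a a b b"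
  shows "3 * ((\<Sum>a\<in>A. \<Sum>b\<in>A. T a a b b) - (\<Sum>a\<in>A. T a a a a))\<^sup>2 + (real (card A) - 1) * (\<Sum>a\<in>A. T a a a a)\<^sup>2
    \<le> real (card A) * (real (card A) - 1) * (\<Sum>a\<in>A. \<Sum>b\<in>A. \<Sum>c\<in>A. \<Sum>d\<in>A. (T a b c d)\<^sup>2)"
proof -
  define n where "n = real (card A)"
  define D where "D = (\<Sum>a\<in>A. (T a a a a)\<^sup>2)"
  define F where "F = (\<Sum>a\<in>A. \<Sum>b\<in>A. (T a a b b)\<^sup>2)"
  have n: "1 \<le> n"
    using A by (simp add: n_def Suc_le_eq card_gt_0_iff)
  have diagonal: "(\<Sum>a\<in>A. T a a a a)\<^sup>2 \<le> D * n"
    using sum_squared_le_sum_of_squares[of "\<lambda>a. T a a a a" A] by (simp add: D_def n_def)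
  have off_diagonal: "((\<Sum>a\<in>A. \<Sum>b\<in>A. T a a b b) - (\<Sum>a\<in>A. T a a a a))\<^sup>2 \<le> (F - D) * (n * n - n)"
    using off_diagonal_sum_squared_le[OF A(1), of "\<lambda>a b. T a a b b"] by (simp add: F_def D_def n_def)
  have "3 * ((\<Sum>a\<in>A. \<Sum>b\<in>A. T a a b b) - (\<Sum>a\<in>A. T a a a a))\<^sup>2 + (n - 1) * (\<Sum>a\<in>A. T a a a a)\<^sup>2
      \<le> 3 * ((F - D) * (n * n - n)) + (n - 1) * (D * n)"
    using off_diagonal diagonal n by (intro add_mono mult_left_mono) auto
  also have "\<dots> = n * (n - 1) * (3 * F - 2 * D)"
    by (simp add: algebra_simps)
  also have "\<dots> \<le> n * (n - 1) * (\<Sum>a\<in>A. \<Sum>b\<in>A. \<Sum>c\<in>A. \<Sum>d\<in>A. (T a b c d)\<^sup>2)"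
    using sum_square_tensor_lower_bound[of A T, OF A(1) sym1 sym2] n
    by (intro mult_left_mono) (auto simp: F_def D_def)
  finally show ?thesis
    by (simp add: n_def)
qed

lemma fourth_moment_lower_bound:
  fixes x :: "'i \<Rightarrow> 'a \<Rightarrow> real" and k :: real
  assumes A: "finite A" "A \<noteq> {}"
    and entries: "\<And>i a. i \<in> I \<Longrightarrow> a \<in> A \<Longrightarrow> x i a \<in> {-1, 0, 1}"
    and weight: "\<And>i. i \<in> I \<Longrightarrow> (\<Sum>a\<in>A. (x i a)\<^sup>2) = k"
  shows "(real (card I))\<^sup>2 * k\<^sup>2 * (real (card A) - 1 + 3 * (k - 1)\<^sup>2)
    \<le> real (card A) * (real (card A) - 1) * (\<Sum>i\<in>I. \<Sum>j\<in>I. (\<Sum>a\<in>A. x i a * x j a) ^ 4)"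
proof -
  define N where "N = real (card I)"
  define T where "T a b c d = (\<Sum>i\<in>I. x i a * x i b * x i c * x i d)" for a b c d
  have T_sym: "T a b a b = T a a b b" "T a b b a = T a a b b" for a b
    by (simp_all add: T_def mult_ac)
  have T_diag: "T a a b b = (\<Sum>i\<in>I. (x i a)\<^sup>2 * (x i b)\<^sup>2)" for a b
    by (simp add: T_def power2_eq_square mult_ac)
  have fourth_eq_square: "(x i a) ^ 4 = (x i a)\<^sup>2" if "i \<in> I" "a \<in> A" for i a
    using entries[OF that] by auto
  have trace: "(\<Sum>a\<in>A. T a a a a) = k * N"
  proof -
    have "(\<Sum>a\<in>A. T a a a a) = (\<Sum>i\<in>I. \<Sum>a\<in>A. (x i a)\<^sup>2)"
      unfolding T_diag by (subst sum.swap) (simp add: fourth_eq_square)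
    then show ?thesis
      by (simp add: weight N_def)
  qed
  have total: "(\<Sum>a\<in>A. \<Sum>b\<in>A. T a a b b) = k\<^sup>2 * N"
  proof -
    have "(\<Sum>a\<in>A. \<Sum>b\<in>A. T a a b b) = (\<Sum>i\<in>I. (\<Sum>a\<in>A. (x i a)\<^sup>2) * (\<Sum>b\<in>A. (x i b)\<^sup>2))"
      unfolding T_diag by (simp add: sum_product sum.swap[of _ I])
    also have "\<dots> = k\<^sup>2 * N"
      using weight by (simp add: N_def power2_eq_square)
    finally show ?thesis .
  qed
  have "N\<^sup>2 * k\<^sup>2 * (real (card A) - 1 + 3 * (k - 1)\<^sup>2)
      = 3 * (k\<^sup>2 * N - k * N)\<^sup>2 + (real (card A) - 1) * (k * N)\<^sup>2"
    by (simp add: power2_eq_square algebra_simps)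
  also have "\<dots> \<le> real (card A) * (real (card A) - 1) * (\<Sum>a\<in>A. \<Sum>b\<in>A. \<Sum>c\<in>A. \<Sum>d\<in>A. (T a b c d)\<^sup>2)"
    using sum_square_symmetric_tensor_ge[of A T, OF A T_sym] by (simp add: trace total)
  finally show ?thesis
    by (simp add: N_def T_def sum_power4_inner_eq_sum_square_moments)
qed

section \<open>Mutually unbiased weighing matrices\<close>

lemma weighing_matrix_entry:
  "weighing_matrix n k W \<Longrightarrow> i < n \<Longrightarrow> j < n \<Longrightarrow> W i j \<in> {-1, 0, 1}"
  unfolding weighing_matrix_def by auto

lemma weighing_matrix_inner_rows:
  "weighing_matrix n k W \<Longrightarrow> i < n \<Longrightarrow> j < n \<Longrightarrow>
    (\<Sum>l<n. W i l * W j l) = (if i = j then real k else 0)"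
  unfolding weighing_matrix_def by auto

lemma inner_rows_scaled_prod:
  assumes A: "weighing_matrix n k A" and Bt: "weighing_matrix n k (\<lambda>i j. B j i)" and k: "0 < k"
    and ij: "i < n" "j < n"
  shows "(\<Sum>l<n. scaled_prod n k A B i l * scaled_prod n k A B j l) = (if i = j then real k else 0)"
proof -
  have "(\<Sum>l<n. scaled_prod n k A B i l * scaled_prod n k A B j l)
      = (\<Sum>l<n. (\<Sum>a<n. A i a * B l a) * (\<Sum>b<n. A j b * B l b)) / real k"
  proof -
    have "(sqrt (real k))\<^sup>2 = real k"
      by simp
    then have "scaled_prod n k A B i l * scaled_prod n k A B j l
        = (\<Sum>a<n. A i a * B l a) * (\<Sum>b<n. A j b * B l b) / real k" if "l < n" for l
      using ij that by (simp add: scaled_prod_def power2_eq_square)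
    then show ?thesis
      by (simp add: sum_divide_distrib)
  qed
  also have "(\<Sum>l<n. (\<Sum>a<n. A i a * B l a) * (\<Sum>b<n. A j b * B l b))
      = (\<Sum>a<n. \<Sum>b<n. A i a * A j b * (\<Sum>l<n. B l a * B l b))"
  proof -
    have "(\<Sum>l<n. (\<Sum>a<n. A i a * B l a) * (\<Sum>b<n. A j b * B l b))
        = (\<Sum>l<n. \<Sum>a<n. \<Sum>b<n. A i a * A j b * (B l a * B l b))"
      by (simp add: sum_product mult_ac)
    also have "\<dots> = (\<Sum>a<n. \<Sum>l<n. \<Sum>b<n. A i a * A j b * (B l a * B l b))"
      by (rule sum.swap)
    also have "\<dots> = (\<Sum>a<n. \<Sum>b<n. \<Sum>l<n. A i a * A j b * (B l a * B l b))"
      by (rule sum.cong[OF refl], rule sum.swap)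
    finally show ?thesis
      by (simp add: sum_distrib_left)
  qed
  also have "\<dots> = (\<Sum>a<n. \<Sum>b<n. A i a * A j b * (if a = b then real k else 0))"
    using weighing_matrix_inner_rows[OF Bt] by (intro sum.cong refl) simp
  also have "\<dots> = real k * (\<Sum>a<n. A i a * A j a)"
    by (simp add: if_distrib sum_distrib_left mult_ac cong: if_cong)
  finally show ?thesis
    using k weighing_matrix_inner_rows[OF A ij] by simp
qed

lemma unbiasedI:
  assumes A: "weighing_matrix n k A" and B: "weighing_matrix n k B"
    and Bt: "weighing_matrix n k (\<lambda>i j. B j i)" and k: "0 < k"
    and entries: "\<And>i j. i < n \<Longrightarrow> j < n \<Longrightarrow> scaled_prod n k A B i j \<in> {-1, 0, 1}"
  shows "unbiased n k A B"
  unfolding unbiased_def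
proof (intro conjI A B)
  show "weighing_matrix n k (scaled_prod n k A B)"
    unfolding weighing_matrix_def
    using entries inner_rows_scaled_prod[OF A Bt k] by (auto simp: scaled_prod_def)
qed

lemma sum_power4_inner_rows_self:
  assumes W: "weighing_matrix n k W" and r: "r < n"
  shows "(\<Sum>s<n. (\<Sum>a<n. W r a * W s a) ^ 4) = real k ^ 4"
proof -
  have "(\<Sum>s<n. (\<Sum>a<n. W r a * W s a) ^ 4) = (\<Sum>s<n. if s = r then real k ^ 4 else 0)"
    using W r by (intro sum.cong) (auto simp: weighing_matrix_inner_rows)
  then show ?thesis
    using r by simp
qed

lemma sum_power4_inner_rows_unbiased:
  assumes U: "unbiased n k W W'" and k: "0 < k" and r: "r < n"
  shows "(\<Sum>s<n. (\<Sum>a<n. W r a * W' s a) ^ 4) = real k ^ 3"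
proof -
  define P where "P = scaled_prod n k W W'"
  have P: "weighing_matrix n k P"
    using U by (simp add: unbiased_def P_def)
  have inner: "(\<Sum>a<n. W r a * W' s a) = sqrt (real k) * P r s" if "s < n" for s
    using that r k by (simp add: P_def scaled_prod_def)
  have sqrt4: "sqrt (real k) ^ 4 = real k ^ 2"
  proof -
    have "sqrt (real k) ^ 4 = ((sqrt (real k))\<^sup>2)\<^sup>2"
      by (simp only: flip: power_mult) simp
    also have "(sqrt (real k))\<^sup>2 = real k"
      by simp
    finally show ?thesis .
  qed
  have "(\<Sum>s<n. (\<Sum>a<n. W r a * W' s a) ^ 4) = (\<Sum>s<n. real k ^ 2 * (P r s)\<^sup>2)"
  proof (intro sum.cong refl)
    fix s assume "s \<in> {..<n}"
    then have "P r s \<in> {-1, 0, 1}" and "(\<Sum>a<n. W r a * W' s a) = sqrt (real k) * P r s"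
      using weighing_matrix_entry[OF P r] inner by auto
    then show "(\<Sum>a<n. W r a * W' s a) ^ 4 = real k ^ 2 * (P r s)\<^sup>2"
      by (auto simp: power_mult_distrib sqrt4)
  qed
  also have "\<dots> = real k ^ 2 * (\<Sum>s<n. P r s * P r s)"
    by (simp add: sum_distrib_left power2_eq_square)
  also have "\<dots> = real k ^ 3"
    using weighing_matrix_inner_rows[OF P r r] by (simp add: power2_eq_square power3_eq_cube)
  finally show ?thesis .
qed

lemma sum_power4_inner_rows_mutually_unbiased:
  assumes S: "finite S" "mutually_unbiased n k S" and k: "0 < k" and W: "W \<in> S" and r: "r < n"
  shows "(\<Sum>(W', s)\<in>S \<times> {..<n}. (\<Sum>a<n. W r a * W' s a) ^ 4) = real k ^ 3 * (real (card S) + real k - 1)"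
proof -
  define h where "h W' = (\<Sum>s<n. (\<Sum>a<n. W r a * W' s a) ^ 4)" for W'
  have "(\<Sum>(W', s)\<in>S \<times> {..<n}. (\<Sum>a<n. W r a * W' s a) ^ 4) = (\<Sum>W'\<in>S. h W')"
    by (simp add: h_def sum.cartesian_product)
  also have "\<dots> = h W + (\<Sum>W'\<in>S - {W}. h W')"
    using S W by (simp add: sum.remove)
  also have "h W = real k ^ 4"
    using S W r by (simp add: h_def mutually_unbiased_def sum_power4_inner_rows_self)
  also have "(\<Sum>W'\<in>S - {W}. h W') = (\<Sum>W'\<in>S - {W}. real k ^ 3)"
    using S W r k by (intro sum.cong) (auto simp: h_def mutually_unbiased_def sum_power4_inner_rows_unbiased)
  also have "real k ^ 4 + (\<Sum>W'\<in>S - {W}. real k ^ 3) = real k ^ 3 * (real (card S) + real k - 1)"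
  proof -
    have "1 \<le> card S"
      using S W by (metis One_nat_def Suc_leI card_gt_0_iff empty_iff)
    then show ?thesis
      using S W by (simp add: of_nat_diff algebra_simps power3_eq_cube power4_eq_xxxx)
  qed
  finally show ?thesis .
qed

lemma card_mutually_unbiased_bound:
  assumes S: "finite S" "mutually_unbiased n k S" and n: "0 < n" and k: "2 \<le> k"
  shows "real (card S) * (3 * real k - real n - 2) \<le> real k * (real n - 1)"
proof (cases "S = {}")
  case True
  then show ?thesis
    using n by simp
next
  case False
  define m where "m = real (card S)"
  define I where "I = S \<times> {..<n}"
  define x where "x = (\<lambda>(W :: nat \<Rightarrow> nat \<Rightarrow> real, r) a. W r a)"
  have weighing: "weighing_matrix n k W" if "W \<in> S" for W
    using S that by (simp add: mutually_unbiased_def)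
  have m: "0 < m"
    using S False by (simp add: m_def card_gt_0_iff)
  have card_I: "real (card I) = real n * m"
    using S by (simp add: I_def m_def card_cartesian_product)
  have entries: "x i a \<in> {-1, 0, 1}" if "i \<in> I" "a \<in> {..<n}" for i a
    using that weighing_matrix_entry[OF weighing] by (auto simp: I_def x_def)
  have weight: "(\<Sum>a\<in>{..<n}. (x i a)\<^sup>2) = real k" if "i \<in> I" for i
    using that weighing_matrix_inner_rows[OF weighing] by (auto simp: I_def x_def power2_eq_square)
  have "(\<Sum>j\<in>I. (\<Sum>a\<in>{..<n}. x i a * x j a) ^ 4) = real k ^ 3 * (m + real k - 1)" if "i \<in> I" for i
    using that S k sum_power4_inner_rows_mutually_unbiased[OF S]
    by (auto simp: I_def x_def m_def case_prod_unfold)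
  then have total: "(\<Sum>i\<in>I. \<Sum>j\<in>I. (\<Sum>a\<in>{..<n}. x i a * x j a) ^ 4) = real n * m * (real k ^ 3 * (m + real k - 1))"
    by (simp add: card_I)
  have "(real n * m)\<^sup>2 * (real k)\<^sup>2 * (real n - 1 + 3 * (real k - 1)\<^sup>2)
      \<le> real n * (real n - 1) * (real n * m * (real k ^ 3 * (m + real k - 1)))"
    using fourth_moment_lower_bound[of "{..<n}" I x "real k", OF _ _ entries weight] S n
    unfolding total card_I by (simp add: I_def lessThan_empty_iff)
  then have "((real n)\<^sup>2 * m * (real k)\<^sup>2) * (m * (real n - 1 + 3 * (real k - 1)\<^sup>2))
      \<le> ((real n)\<^sup>2 * m * (real k)\<^sup>2) * ((real n - 1) * real k * (m + real k - 1))"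
    by (simp add: power2_eq_square power3_eq_cube algebra_simps)
  then have "m * (real n - 1 + 3 * (real k - 1)\<^sup>2) \<le> (real n - 1) * real k * (m + real k - 1)"
    using n m k by (simp add: mult_le_cancel_left_pos)
  then have "0 \<le> (real k - 1) * (real k * (real n - 1) - m * (3 * real k - real n - 2))"
    by (simp add: power2_eq_square algebra_simps)
  then show ?thesis
    using k by (simp add: m_def zero_le_mult_iff)
qed

lemma W_max_bounds:
  assumes "finite S\<^sub>0" "mutually_unbiased n k S\<^sub>0"
    and bound: "\<And>S. finite S \<Longrightarrow> mutually_unbiased n k S \<Longrightarrow> card S \<le> b"
  shows "card S\<^sub>0 \<le> W_max n k" and "W_max n k \<le> b"
proof -
  define sizes where "sizes = {card S |S. finite S \<and> mutually_unbiased n k S}"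
  have S\<^sub>0: "card S\<^sub>0 \<in> sizes" and le_b: "\<And>m. m \<in> sizes \<Longrightarrow> m \<le> b"
    using assms by (auto simp: sizes_def)
  have "bdd_above sizes"
    using le_b by (auto simp: bdd_above_def)
  then show "card S\<^sub>0 \<le> W_max n k"
    unfolding W_max_def sizes_def[symmetric] using S\<^sub>0 by (rule cSup_upper[rotated])
  show "W_max n k \<le> b"
    unfolding W_max_def sizes_def[symmetric] using S\<^sub>0 le_b by (intro cSup_least) auto
qed

section \<open>Weighing matrices given by integer rows\<close>

definition row_dot :: "int list \<Rightarrow> int list \<Rightarrow> int" where
  "row_dot xs ys = sum_list (map2 (*) xs ys)"

definition gram :: "int list list \<Rightarrow> int list list" where
  "gram M = map (\<lambda>r. map (row_dot r) M) M"

definition scalar_matrix :: "int \<Rightarrow> nat \<Rightarrow> int list list" where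
  "scalar_matrix c n = map (\<lambda>i. map (\<lambda>j. if i = j then c else 0) [0..<n]) [0..<n]"

definition weighing_rows :: "nat \<Rightarrow> int list list \<Rightarrow> bool" where
  "weighing_rows k M \<longleftrightarrow> (\<forall>r\<in>set M. length r = length M \<and> set r \<subseteq> {-1, 0, 1})
     \<and> gram M = scalar_matrix (int k) (length M)"

definition unbiased_rows :: "nat \<Rightarrow> int list list \<Rightarrow> int list list \<Rightarrow> bool" where
  "unbiased_rows s M N \<longleftrightarrow> (\<forall>r\<in>set M. \<forall>t\<in>set N. row_dot r t \<in> {- int s, 0, int s})"

definition mat_of_rows :: "int list list \<Rightarrow> nat \<Rightarrow> nat \<Rightarrow> real" where
  "mat_of_rows M i j = (if i < length M \<and> j < length M then of_int (M ! i ! j) else 0)"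

lemma row_dot_commute: "row_dot xs ys = row_dot ys xs"
  unfolding row_dot_def by (subst zip_commute) (simp add: comp_def case_prod_unfold mult.commute)

lemma row_dot_eq_sum:
  assumes "length xs = n" "length ys = n"
  shows "real_of_int (row_dot xs ys) = (\<Sum>l<n. of_int (xs ! l) * of_int (ys ! l))"
  using assms by (simp add: row_dot_def sum_list_sum_nth atLeast0LessThan)

lemma transpose_square:
  assumes "\<forall>r\<in>set M. length r = length M"
  shows "length (transpose M) = length M"
    and "i < length M \<Longrightarrow> transpose M ! i = map (\<lambda>r. r ! i) M"
proof -
  have "map length M = replicate (length M) (length M)"
    using assms by (intro nth_equalityI) auto
  then have "sorted (rev (map length M))"
    by simp
  with assms show length: "length (transpose M) = length M"
    by (cases M) (auto simp: length_transpose_sorted)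
  show "transpose M ! i = map (\<lambda>r. r ! i) M" if "i < length M"
    using that assms length by (simp add: nth_transpose filter_True)
qed

lemma mat_of_rows_transpose:
  assumes "\<forall>r\<in>set M. length r = length M"
  shows "mat_of_rows (transpose M) = (\<lambda>i j. mat_of_rows M j i)"
  using transpose_square[OF assms] by (auto simp: mat_of_rows_def fun_eq_iff)

lemma inner_mat_of_rows:
  assumes "\<forall>r\<in>set M. length r = length M" "\<forall>r\<in>set N. length r = length M"
    and "length N = length M" "i < length M" "j < length M"
  shows "(\<Sum>l<length M. mat_of_rows M i l * mat_of_rows N j l) = of_int (row_dot (M ! i) (N ! j))"
  using assms by (simp add: mat_of_rows_def row_dot_eq_sum)

lemma weighing_matrix_mat_of_rows:
  assumes "weighing_rows k M"
  shows "weighing_matrix (length M) k (mat_of_rows M)"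
  unfolding weighing_matrix_def
proof (intro conjI allI impI)
  fix i j assume "\<not> (i < length M \<and> j < length M)"
  then show "mat_of_rows M i j = 0"
    by (auto simp: mat_of_rows_def)
next
  fix i j assume ij: "i < length M" "j < length M"
  then have "length (M ! i) = length M" "set (M ! i) \<subseteq> {-1, 0, 1}"
    using assms by (auto simp: weighing_rows_def)
  then have "M ! i ! j \<in> {-1, 0, 1}"
    using ij by (metis nth_mem subsetD)
  then show "mat_of_rows M i j \<in> {1, -1, 0}"
    using ij by (auto simp: mat_of_rows_def)
next
  fix i j assume ij: "i < length M" "j < length M"
  have "gram M ! i ! j = scalar_matrix (int k) (length M) ! i ! j"
    using assms by (simp add: weighing_rows_def)
  then have "row_dot (M ! i) (M ! j) = (if i = j then int k else 0)"
    using ij by (simp add: gram_def scalar_matrix_def)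
  then show "(\<Sum>l<length M. mat_of_rows M i l * mat_of_rows M j l) = (if i = j then real k else 0)"
    using assms ij by (simp add: inner_mat_of_rows weighing_rows_def)
qed

lemma unbiased_mat_of_rows:
  assumes M: "weighing_rows (s\<^sup>2) M" and N: "weighing_rows (s\<^sup>2) N" "weighing_rows (s\<^sup>2) (transpose N)"
    and len: "length N = length M" and s: "0 < s" and U: "unbiased_rows s M N"
  shows "unbiased (length M) (s\<^sup>2) (mat_of_rows M) (mat_of_rows N)"
proof (rule unbiasedI)
  have square: "\<forall>r\<in>set N. length r = length N"
    using N by (simp add: weighing_rows_def)
  show "weighing_matrix (length M) (s\<^sup>2) (mat_of_rows M)"
    using M by (rule weighing_matrix_mat_of_rows)
  show "weighing_matrix (length M) (s\<^sup>2) (mat_of_rows N)"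
    using weighing_matrix_mat_of_rows[OF N(1)] len by simp
  show "weighing_matrix (length M) (s\<^sup>2) (\<lambda>i j. mat_of_rows N j i)"
    using weighing_matrix_mat_of_rows[OF N(2)] len transpose_square(1)[OF square]
    by (simp add: mat_of_rows_transpose[OF square])
  show "0 < s\<^sup>2"
    using s by simp
  fix i j assume ij: "i < length M" "j < length M"
  have "row_dot (M ! i) (N ! j) \<in> {- int s, 0, int s}"
    using U ij len by (simp add: unbiased_rows_def)
  moreover have "scaled_prod (length M) (s\<^sup>2) (mat_of_rows M) (mat_of_rows N) i j
      = of_int (row_dot (M ! i) (N ! j)) / real s"
    using M N ij len by (simp add: scaled_prod_def inner_mat_of_rows weighing_rows_def)
  ultimately show "scaled_prod (length M) (s\<^sup>2) (mat_of_rows M) (mat_of_rows N) i j \<in> {-1, 0, 1}"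
    using s by auto
qed

lemma unbiased_rows_commute: "unbiased_rows s M N = unbiased_rows s N M"
  unfolding unbiased_rows_def by (metis row_dot_commute)

lemma inj_on_mat_of_rows: "inj_on mat_of_rows {M. length M = n \<and> (\<forall>r\<in>set M. length r = n)}"
proof (rule inj_onI)
  fix M N :: "int list list"
  assume "M \<in> {M. length M = n \<and> (\<forall>r\<in>set M. length r = n)}" "N \<in> {M. length M = n \<and> (\<forall>r\<in>set M. length r = n)}"
  then have M: "length M = n" "\<forall>r\<in>set M. length r = n" and N: "length N = n" "\<forall>r\<in>set N. length r = n"
    by auto
  assume eq: "mat_of_rows M = mat_of_rows N"
  show "M = N"
  proof (rule nth_equalityI)
    show "length M = length N"
      using M N by simp
    fix i assume i: "i < length M"
    show "M ! i = N ! i"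
    proof (rule nth_equalityI)
      show "length (M ! i) = length (N ! i)"
        using M N i by simp
      fix j assume "j < length (M ! i)"
      then show "M ! i ! j = N ! i ! j"
        using fun_cong[OF fun_cong[OF eq, of i], of j] M N i by (simp add: mat_of_rows_def)
    qed
  qed
qed

lemma mutually_unbiased_mat_of_rows:
  assumes weighing: "\<And>M. M \<in> set Ms \<Longrightarrow> length M = n \<and> weighing_rows (s\<^sup>2) M \<and> weighing_rows (s\<^sup>2) (transpose M)"
    and pairs: "sorted_wrt (unbiased_rows s) Ms" and s: "0 < s"
  shows "mutually_unbiased n (s\<^sup>2) (mat_of_rows ` set Ms)"
  unfolding mutually_unbiased_def
proof (intro conjI ballI impI)
  fix W assume "W \<in> mat_of_rows ` set Ms"
  then show "weighing_matrix n (s\<^sup>2) W"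
    using weighing weighing_matrix_mat_of_rows by force
next
  fix W1 W2 assume W: "W1 \<in> mat_of_rows ` set Ms" "W2 \<in> mat_of_rows ` set Ms" "W1 \<noteq> W2"
  then obtain i j where ij: "i < length Ms" "j < length Ms"
    and W12: "W1 = mat_of_rows (Ms ! i)" "W2 = mat_of_rows (Ms ! j)"
    by (auto simp: in_set_conv_nth)
  with W(3) have "i \<noteq> j"
    by auto
  have "unbiased_rows s (Ms ! i) (Ms ! j)"
  proof (cases "i < j")
    case True
    then show ?thesis
      using ij pairs by (simp add: sorted_wrt_iff_nth_less)
  next
    case False
    with \<open>i \<noteq> j\<close> have "j < i"
      by simp
    then show ?thesis
      using ij pairs unbiased_rows_commute by (metis sorted_wrt_iff_nth_less)
  qed
  then show "unbiased n (s\<^sup>2) W1 W2"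
    using unbiased_mat_of_rows weighing[OF nth_mem[OF ij(1)]] weighing[OF nth_mem[OF ij(2)]] s
    unfolding W12 by metis
qed

lemma card_mat_of_rows:
  assumes "\<And>M. M \<in> set Ms \<Longrightarrow> length M = n \<and> weighing_rows k M" and "distinct Ms"
  shows "card (mat_of_rows ` set Ms) = length Ms"
proof -
  have "set Ms \<subseteq> {M. length M = n \<and> (\<forall>r\<in>set M. length r = n)}"
    using assms(1) by (auto simp: weighing_rows_def)
  then have "inj_on mat_of_rows (set Ms)"
    using inj_on_mat_of_rows inj_on_subset by blast
  then show ?thesis
    using assms(2) by (simp add: card_image distinct_card)
qed

section \<open>Order 19 and weight 9\<close>

definition mub_19_9 :: "int list list list" where
  "mub_19_9 = [
  [[0,1,-1,0,1,0,1,0,0,-1,0,0,0,0,1,0,1,1,1],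
    [0,0,1,1,0,1,0,1,-1,-1,0,0,-1,-1,0,1,0,0,0],
    [0,1,0,0,-1,1,0,0,0,-1,-1,-1,1,0,-1,-1,0,0,0],
    [0,1,0,1,0,0,0,1,0,0,0,1,1,1,1,0,-1,0,-1],
    [1,0,0,-1,0,1,0,1,-1,1,1,0,0,0,0,-1,0,1,0],
    [1,0,1,0,1,0,1,0,0,0,0,-1,0,1,0,0,-1,-1,1],
    [0,1,1,0,1,0,0,-1,-1,1,-1,0,0,0,0,0,1,0,-1],
    [0,1,0,-1,0,-1,0,0,-1,-1,1,1,0,0,-1,0,0,-1,0],
    [0,0,0,0,0,1,1,0,1,0,1,0,0,1,-1,1,1,0,-1],
    [1,0,1,0,0,-1,0,0,1,-1,0,0,-1,0,0,-1,0,1,-1],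
    [1,1,0,0,-1,0,-1,-1,0,0,1,-1,0,0,1,1,0,0,0],
    [1,0,-1,-1,0,0,1,0,0,0,-1,0,0,-1,0,1,-1,0,-1],
    [1,1,0,1,0,0,0,0,1,1,0,1,0,-1,-1,0,0,0,1],
    [1,0,-1,0,0,0,-1,1,0,0,-1,0,-1,1,0,0,1,-1,0],
    [0,0,1,-1,0,0,0,1,1,0,0,0,1,-1,1,0,1,-1,0],
    [1,-1,0,1,-1,-1,1,0,-1,0,0,0,1,0,0,0,1,0,0],
    [0,0,0,0,1,-1,-1,1,0,0,0,-1,1,0,-1,1,0,1,0],
    [1,-1,0,0,1,1,-1,-1,0,-1,0,1,1,0,0,0,0,0,0],
    [0,0,1,-1,-1,0,0,0,0,0,-1,1,0,1,0,1,0,1,1]],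

  [[1,0,0,0,-1,1,-1,0,-1,-1,0,0,0,0,0,0,-1,1,1],
    [1,1,0,-1,1,0,0,-1,1,-1,1,0,0,1,0,0,0,0,0],
    [1,-1,0,0,0,0,-1,-1,-1,0,0,-1,0,0,0,0,1,-1,-1],
    [1,0,1,1,0,-1,0,0,0,1,1,0,1,0,0,1,-1,0,0],
    [0,1,0,1,1,0,-1,0,0,0,0,0,-1,-1,-1,0,0,1,-1],
    [0,1,1,-1,0,0,0,0,-1,1,0,0,-1,0,0,-1,-1,-1,0],
    [1,0,0,1,0,-1,0,0,0,0,0,1,-1,0,1,-1,1,0,1],
    [1,0,-1,0,1,1,1,0,0,1,0,-1,0,-1,0,0,0,0,1],
    [0,1,0,0,0,-1,1,-1,-1,-1,-1,0,1,-1,0,0,0,0,0],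
    [0,0,1,0,-1,0,1,0,0,0,1,-1,0,0,-1,-1,1,1,0],
    [0,1,0,0,0,0,-1,0,0,1,-1,0,1,1,-1,0,1,0,1],
    [1,1,0,0,-1,0,0,1,1,0,-1,-1,0,0,1,0,0,0,-1],
    [1,-1,1,-1,0,0,0,0,1,0,-1,1,0,-1,-1,0,0,0,0],
    [0,0,1,1,1,1,0,1,0,-1,0,0,1,0,0,-1,0,-1,0],
    [0,1,0,0,-1,1,0,0,0,0,1,1,0,-1,0,1,1,-1,0],
    [0,0,1,1,0,1,1,-1,0,0,-1,0,-1,1,0,1,0,0,0],
    [1,0,-1,0,0,0,1,1,-1,0,0,1,0,1,-1,0,0,0,-1],
    [0,0,0,0,0,1,0,-1,0,1,0,1,1,0,1,-1,0,1,-1],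
    [0,0,1,-1,1,0,0,1,-1,0,0,0,0,0,1,1,1,1,0]],

  [[0,1,-1,1,0,-1,0,-1,0,0,0,-1,-1,-1,0,0,0,0,1],
    [1,0,0,0,0,0,1,0,-1,-1,-1,0,-1,0,1,0,1,0,-1],
    [0,1,0,-1,0,0,0,1,-1,1,-1,-1,1,-1,0,0,0,0,0],
    [0,0,1,-1,-1,0,0,0,0,1,1,0,-1,0,1,0,1,0,1],
    [1,0,0,0,0,-1,0,0,1,1,-1,1,0,0,1,0,-1,1,0],
    [0,1,1,0,0,0,-1,0,0,-1,0,-1,0,1,1,-1,-1,0,0],
    [1,0,0,0,0,-1,0,0,1,0,0,-1,1,1,0,1,1,-1,0],
    [0,1,1,1,0,0,1,1,1,0,1,0,0,-1,0,0,0,0,-1],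
    [1,1,0,0,0,1,1,-1,0,1,0,0,0,1,-1,-1,0,0,0],
    [0,0,1,-1,1,-1,1,0,0,-1,0,0,0,0,-1,0,0,1,1],
    [1,0,0,1,1,1,-1,1,0,0,0,0,0,0,0,0,1,1,1],
    [0,1,0,0,1,0,0,-1,-1,0,1,1,1,0,1,1,0,0,0],
    [1,0,-1,-1,1,0,0,1,0,0,1,0,-1,0,0,0,-1,-1,0],
    [0,1,-1,-1,-1,1,0,0,1,-1,0,0,0,0,0,1,0,1,0],
    [1,-1,1,0,0,1,0,-1,0,0,0,-1,0,-1,0,1,-1,0,0],
    [1,0,0,0,-1,-1,-1,0,-1,0,1,0,0,0,-1,0,0,1,-1],
    [1,0,0,0,-1,0,0,0,0,-1,0,1,1,-1,0,-1,0,-1,1],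
    [0,1,1,0,0,0,-1,0,0,0,-1,1,-1,0,-1,1,0,-1,0],
    [0,0,0,1,-1,0,1,1,-1,0,0,0,0,1,0,1,-1,0,1]],

  [[0,1,0,0,0,0,1,0,-1,0,1,-1,0,-1,0,1,-1,-1,0],
    [1,1,0,0,1,-1,0,1,0,0,0,1,0,1,0,1,0,0,1],
    [1,0,-1,1,0,1,0,1,0,0,0,-1,0,1,0,-1,-1,0,0],
    [1,0,0,0,1,0,0,-1,-1,0,1,1,-1,0,0,-1,0,0,-1],
    [0,0,0,0,1,1,0,1,1,0,0,0,-1,-1,-1,0,1,-1,0],
    [1,0,-1,-1,0,0,-1,-1,1,0,0,0,0,-1,0,0,-1,0,1],
    [0,0,1,1,0,0,-1,0,1,0,0,0,-1,0,1,1,-1,0,-1],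
    [0,1,1,-1,-1,1,-1,0,0,0,1,0,0,1,-1,0,0,0,0],
    [1,0,1,-1,1,0,0,0,0,-1,-1,-1,1,0,0,0,0,0,-1],
    [0,1,0,1,0,1,-1,0,-1,0,-1,1,1,-1,0,0,0,0,0],
    [1,-1,1,0,-1,0,0,0,-1,0,-1,0,-1,0,0,0,0,-1,1],
    [0,1,-1,0,-1,-1,0,0,0,-1,-1,0,-1,0,-1,0,0,0,-1],
    [1,0,0,0,-1,0,1,0,1,1,0,1,1,0,0,0,0,-1,-1],
    [0,0,1,0,0,-1,0,1,0,1,0,0,0,-1,-1,-1,-1,1,0],
    [0,1,1,1,0,0,1,-1,1,-1,0,0,0,0,0,-1,0,0,1],
    [1,0,0,1,0,0,0,-1,0,1,0,-1,0,0,-1,1,1,1,0],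
    [0,1,0,-1,0,1,1,0,0,1,-1,0,-1,0,1,0,0,1,0],
    [0,1,0,0,0,-1,-1,0,0,1,0,-1,0,0,1,-1,1,-1,0],
    [1,0,0,0,-1,0,0,1,0,-1,1,0,0,-1,1,0,1,1,0]],

  [[0,1,-1,0,0,1,-1,0,0,-1,1,0,1,0,0,0,-1,-1,0],
    [1,0,0,0,-1,1,1,0,1,0,0,0,0,-1,0,-1,-1,1,0],
    [1,0,0,1,-1,1,0,0,-1,0,1,0,-1,1,0,0,1,0,0],
    [1,0,1,0,0,0,0,-1,1,0,0,1,0,0,1,1,0,-1,1],
    [0,0,1,0,-1,0,0,0,-1,0,-1,0,1,0,1,-1,0,-1,-1],
    [0,1,1,1,1,0,1,0,-1,0,0,1,0,0,-1,0,-1,0,0],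
    [1,-1,1,0,1,0,-1,1,0,0,1,0,0,-1,0,0,0,0,-1],
    [1,0,0,-1,0,-1,0,-1,-1,-1,0,-1,-1,0,0,0,-1,0,0],
    [0,0,0,1,0,0,0,0,-1,0,0,-1,1,-1,1,1,0,1,1],
    [0,0,0,1,1,0,1,0,1,-1,0,-1,0,1,1,0,0,0,-1],
    [0,0,0,0,0,1,0,1,0,1,-1,-1,-1,0,0,1,-1,-1,0],
    [0,1,1,1,-1,-1,-1,0,1,0,0,-1,0,0,-1,0,0,0,0],
    [0,0,0,0,0,1,0,-1,0,-1,-1,0,0,-1,-1,1,1,0,-1],
    [0,1,0,0,0,0,-1,1,0,-1,-1,1,-1,0,1,0,0,1,0],
    [1,-1,0,0,0,0,0,1,0,-1,-1,0,1,1,-1,0,0,0,1],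
    [1,1,0,-1,0,0,0,0,0,1,0,0,1,1,0,1,0,1,-1],
    [0,1,1,-1,1,1,0,0,0,0,0,-1,0,0,0,-1,1,0,1],
    [1,1,-1,0,0,-1,1,1,0,0,0,0,0,-1,0,0,1,-1,0],
    [1,0,-1,1,1,0,-1,-1,0,1,-1,0,0,0,0,-1,0,0,0]],

  [[0,1,0,0,0,1,0,0,1,1,0,0,1,-1,1,1,-1,0,0],
    [0,0,1,0,-1,1,1,1,0,1,0,1,-1,0,-1,0,0,0,0],
    [0,0,1,1,0,0,0,0,-1,0,-1,-1,1,0,-1,1,0,-1,0],
    [1,-1,1,1,0,0,-1,0,1,0,0,0,0,0,0,-1,-1,0,1],
    [0,0,0,0,1,-1,-1,1,0,1,-1,1,0,-1,0,0,1,0,0],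
    [0,0,1,0,0,1,-1,-1,-1,0,1,0,0,-1,0,0,1,1,0],
    [1,-1,-1,0,0,1,0,1,0,0,1,0,1,0,0,0,1,-1,0],
    [1,1,0,-1,0,-1,0,0,0,1,1,-1,0,0,-1,0,0,0,1],
    [0,1,1,0,0,0,0,1,1,-1,0,0,1,1,0,0,1,1,0],
    [1,0,0,1,1,0,1,0,-1,1,0,0,0,1,1,0,0,1,0],
    [1,1,0,0,0,0,0,1,-1,-1,0,0,0,-1,0,-1,-1,0,-1],
    [0,1,0,0,-1,0,-1,0,-1,0,0,1,0,1,1,0,0,-1,1],
    [1,1,0,1,0,0,0,-1,1,0,0,0,-1,0,0,0,1,-1,-1],
    [1,0,0,-1,1,1,0,0,0,-1,-1,0,-1,0,0,1,0,0,1],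
    [0,0,0,1,0,-1,1,0,0,-1,1,1,0,-1,0,1,0,0,1],
    [0,0,1,-1,1,0,1,-1,0,0,0,1,1,0,0,-1,0,-1,0],
    [1,-1,1,-1,-1,-1,0,0,0,0,0,0,0,0,1,1,0,0,-1],
    [1,0,-1,0,-1,0,0,-1,0,0,-1,1,1,0,-1,0,0,1,0],
    [0,0,0,0,1,0,-1,0,0,0,1,1,0,1,-1,1,-1,0,-1]]]"

lemma mub_19_9_weighing:
  "\<forall>M\<in>set mub_19_9. length M = 19 \<and> weighing_rows (3\<^sup>2) M \<and> weighing_rows (3\<^sup>2) (transpose M)"
  by code_simp

lemma mub_19_9_unbiased: "sorted_wrt (unbiased_rows 3) mub_19_9"
  by code_simp

lemma mub_19_9_distinct: "distinct mub_19_9"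
  by code_simp

theorem proposition6p8:
  shows "W_max 19 9 \<in> {6..27}"
proof -
  define S\<^sub>0 where "S\<^sub>0 = mat_of_rows ` set mub_19_9"
  have weighing: "length M = 19 \<and> weighing_rows (3\<^sup>2) M \<and> weighing_rows (3\<^sup>2) (transpose M)"
    if "M \<in> set mub_19_9" for M
    using mub_19_9_weighing that by blast
  have "mutually_unbiased 19 9 S\<^sub>0"
    using mutually_unbiased_mat_of_rows[OF weighing mub_19_9_unbiased] by (simp add: S\<^sub>0_def)
  moreover have "card S\<^sub>0 = 6"
  proof -
    have "card S\<^sub>0 = length mub_19_9"
      unfolding S\<^sub>0_def using weighing by (intro card_mat_of_rows mub_19_9_distinct) blast
    then show ?thesis
      by (simp add: mub_19_9_def)
  qed
  moreover have "card S \<le> 27" if "finite S" "mutually_unbiased 19 9 S" for S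
    using card_mutually_unbiased_bound[OF that] by simp
  ultimately show ?thesis
    using W_max_bounds[of S\<^sub>0 19 9 27] by (simp add: S\<^sub>0_def)
qed

end
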